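(* Let $X$ be a $T_1$ space and $\mathcal{P}$ an ideal of closed subsets of $X$ containing every singleton subset of $X$. Then $X$ is $\tau\mathcal{P}$-compact if and only if $X$ is finite.
   Context: An ideal of closed subsets of $X$ is a family $\mathcal{P}$ of closed subsets closed under finite unions and under passing to closed subsets. $D_f$ is the set of discontinuity points of $f\in\mathbb{R}^X$; $C(X)_\mathcal{P}=\{f\in\mathbb{R}^X\colon\overline{D_f}\in\mathcal{P}\}$; for $f\in C(X)_\mathcal{P}$, $Z_\mathcal{P}(f)=\{x\colon f(x)=0\}$ and $Z_\mathcal{P}[X]$ is the set of all such sets. $X$ is $\tau\mathcal{P}$-compact if every subfamily of $Z_\mathcal{P}[X]$ with the finite intersection property has nonempty intersection. *)

theory Defs
  imports "HOL-Analysis.Analysis"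
begin

definition closed_ideal :: "'a topology \<Rightarrow> 'a set set \<Rightarrow> bool" where
  "closed_ideal X P \<longleftrightarrow>
     (\<forall>A\<in>P. closedin X A) \<and>
     (\<forall>A\<in>P. \<forall>B\<in>P. A \<union> B \<in> P) \<and>
     (\<forall>A\<in>P. \<forall>B. closedin X B \<and> B \<subseteq> A \<longrightarrow> B \<in> P)"

definition discont_points :: "'a topology \<Rightarrow> ('a \<Rightarrow> real) \<Rightarrow> 'a set" where
  "discont_points X f = {x \<in> topspace X. \<not> limitin euclideanreal f (f x) (atin X x)}"

definition C_P :: "'a topology \<Rightarrow> 'a set set \<Rightarrow> ('a \<Rightarrow> real) set" where
  "C_P X P = {f. X closure_of (discont_points X f) \<in> P}"

definition zero_set :: "'a topology \<Rightarrow> ('a \<Rightarrow> real) \<Rightarrow> 'a set" where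
  "zero_set X f = {x \<in> topspace X. f x = 0}"

definition Z_P :: "'a topology \<Rightarrow> 'a set set \<Rightarrow> 'a set set" where
  "Z_P X P = zero_set X ` C_P X P"

definition has_fip :: "'a set set \<Rightarrow> bool" where
  "has_fip \<F> \<longleftrightarrow> (\<forall>\<G>. \<G> \<subseteq> \<F> \<and> finite \<G> \<and> \<G> \<noteq> {} \<longrightarrow> \<Inter>\<G> \<noteq> {})"

definition tauP_compact :: "'a topology \<Rightarrow> 'a set set \<Rightarrow> bool" where
  "tauP_compact X P \<longleftrightarrow>
     (\<forall>\<F>. \<F> \<subseteq> Z_P X P \<and> \<F> \<noteq> {} \<and> has_fip \<F> \<longrightarrow> \<Inter>\<F> \<noteq> {})"

end

theory Submission
  imports Defs
begin

text \<open>
  If \<open>X\<close> is infinite, the sets \<open>X - {x}\<close> are \<open>Z\<^sub>P\<close>-sets: \<open>X - {x}\<close> is the zero set of the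
  indicator of \<open>{x}\<close>, which is continuous off the closed set \<open>{x} \<in> P\<close>. Any finitely many of
  them meet, since removing finitely many points from an infinite set leaves points, yet all of
  them together have empty intersection. If \<open>X\<close> is finite, every family of subsets of \<open>X\<close> is
  finite, so the finite intersection property already gives a nonempty intersection.
\<close>

lemma discont_points_disjoint_open_constant:
  assumes "openin X U" and "\<And>y. y \<in> U \<Longrightarrow> f y = c"
  shows "discont_points X f \<inter> U = {}"
proof -
  have "limitin euclideanreal f (f y) (atin X y)" if "y \<in> U" for y
  proof (rule limitin_eventually)
    show "\<forall>\<^sub>F z in atin X y. f z = f y"
      unfolding eventually_atin using assms that by blast
  qed simp
  then show ?thesis
    by (auto simp: discont_points_def)
qed

lemma discont_points_indicator_singleton:
  assumes "closedin X {x}"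
  shows "discont_points X (\<lambda>y. if y = x then 1 else 0) \<subseteq> {x}"
proof -
  have "discont_points X (\<lambda>y. if y = x then 1 else 0) \<inter> (topspace X - {x}) = {}"
    by (rule discont_points_disjoint_open_constant[where c = 0]) (use assms in auto)
  moreover have "discont_points X (\<lambda>y. if y = x then 1 else 0) \<subseteq> topspace X"
    unfolding discont_points_def by blast
  ultimately show ?thesis
    by blast
qed

lemma C_P_if_discont_points_subset:
  assumes "closed_ideal X P" and "A \<in> P" and "discont_points X f \<subseteq> A"
  shows "f \<in> C_P X P"
proof -
  have "closedin X A"
    using assms(1,2) unfolding closed_ideal_def by blast
  then have "X closure_of discont_points X f \<subseteq> A"
    using assms(3) by (intro closure_of_minimal)
  moreover have "\<forall>B. closedin X B \<and> B \<subseteq> A \<longrightarrow> B \<in> P"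
    using assms(1,2) unfolding closed_ideal_def by blast
  ultimately have "X closure_of discont_points X f \<in> P"
    by (simp add: closedin_closure_of)
  then show ?thesis
    by (simp add: C_P_def)
qed

lemma topspace_Diff_singleton_in_Z_P:
  assumes "t1_space X" and "closed_ideal X P" and "{x} \<in> P" and "x \<in> topspace X"
  shows "topspace X - {x} \<in> Z_P X P"
proof -
  define f :: "'a \<Rightarrow> real" where "f = (\<lambda>y. if y = x then 1 else 0)"
  have "discont_points X f \<subseteq> {x}"
    unfolding f_def
    using assms(1,4) by (simp add: discont_points_indicator_singleton t1_space_closedin_singleton)
  then have "f \<in> C_P X P"
    by (rule C_P_if_discont_points_subset[OF assms(2,3)])
  moreover have "zero_set X f = topspace X - {x}"
    by (auto simp: zero_set_def f_def)
  ultimately show ?thesis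
    unfolding Z_P_def by (metis rev_image_eqI)
qed

lemma has_fip_Diff_singletons:
  assumes "infinite S"
  shows "has_fip ((\<lambda>x. S - {x}) ` S)"
  unfolding has_fip_def
proof (intro allI impI)
  fix \<G> assume \<G>: "\<G> \<subseteq> (\<lambda>x. S - {x}) ` S \<and> finite \<G> \<and> \<G> \<noteq> {}"
  then obtain T where T: "T \<subseteq> S" "finite T" "\<G> = (\<lambda>x. S - {x}) ` T"
    using finite_subset_image by meson
  then have "T \<noteq> {}"
    using \<G> by blast
  then have "\<Inter>\<G> = S - T"
    using T(1,3) by auto
  moreover have "S - T \<noteq> {}"
    using assms T(1,2) by (metis Diff_eq_empty_iff finite_subset)
  ultimately show "\<Inter>\<G> \<noteq> {}"
    by simp
qed

lemma Inter_nonempty_if_has_fip_finite: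
  assumes "has_fip \<F>" and "finite \<F>" and "\<F> \<noteq> {}"
  shows "\<Inter>\<F> \<noteq> {}"
  using assms by (simp add: has_fip_def)

lemma tauP_compact_if_finite_topspace:
  assumes "finite (topspace X)"
  shows "tauP_compact X P"
  unfolding tauP_compact_def
proof (intro allI impI)
  fix \<F> assume \<F>: "\<F> \<subseteq> Z_P X P \<and> \<F> \<noteq> {} \<and> has_fip \<F>"
  have "Z_P X P \<subseteq> Pow (topspace X)"
    by (auto simp: Z_P_def zero_set_def)
  then have "\<F> \<subseteq> Pow (topspace X)"
    using \<F> by blast
  then have "finite \<F>"
    by (rule finite_subset) (simp add: assms)
  then show "\<Inter>\<F> \<noteq> {}"
    using \<F> Inter_nonempty_if_has_fip_finite by blast
qed

lemma finite_topspace_if_tauP_compact: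
  assumes "tauP_compact X P" and "t1_space X" and "closed_ideal X P"
    and "\<forall>x\<in>topspace X. {x} \<in> P"
  shows "finite (topspace X)"
proof (rule ccontr)
  assume infinite: "infinite (topspace X)"
  define \<F> where "\<F> = (\<lambda>x. topspace X - {x}) ` topspace X"
  have "\<F> \<subseteq> Z_P X P"
    using topspace_Diff_singleton_in_Z_P[OF assms(2,3)] assms(4) by (auto simp: \<F>_def)
  moreover have "\<F> \<noteq> {}"
    using infinite by (auto simp: \<F>_def)
  moreover have "has_fip \<F>"
    unfolding \<F>_def using infinite by (rule has_fip_Diff_singletons)
  moreover have "\<Inter>\<F> = {}"
    using infinite by (auto simp: \<F>_def)
  ultimately show False
    using assms(1) unfolding tauP_compact_def by blast
qed

theorem corollary5p6:
  fixes X :: "'a topology" and P :: "'a set set"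
  assumes "t1_space X"
    and "closed_ideal X P"
    and "\<forall>x\<in>topspace X. {x} \<in> P"
  shows "tauP_compact X P \<longleftrightarrow> finite (topspace X)"
  using finite_topspace_if_tauP_compact[OF _ assms] tauP_compact_if_finite_topspace by blast

end
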